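(* Let $G$ be a profinite group, let $g\in G$, and let $K$ be the closed normal subgroup of $G$ generated by $g$. Then $d(K/[K,K])\le |G:C_G(g)K|$, where $C_G(g)$ is the centralizer of $g$ in $G$.
   Context: $[K,K]$ denotes the closed commutator subgroup of $K$, and $d(\cdot)$ denotes the minimal number of topological generators of a profinite group. *)

theory Defs
  imports "HOL-Analysis.Analysis" "HOL-Algebra.Algebra" "HOL-Library.Extended_Nat"
begin

definition profinite_group :: "('a, 'b) monoid_scheme \<Rightarrow> 'a topology \<Rightarrow> bool" where
  "profinite_group G T \<longleftrightarrow> group G \<and> topspace T = carrier G
     \<and> continuous_map (prod_topology T T) T (\<lambda>(x, y). x \<otimes>\<^bsub>G\<^esub> y)
     \<and> continuous_map T T (\<lambda>x. inv\<^bsub>G\<^esub> x)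
     \<and> compact_space T \<and> Hausdorff_space T
     \<and> (\<forall>x \<in> topspace T. connected_component_of_set T x = {x})"

definition quotient_top :: "'a topology \<Rightarrow> ('a \<Rightarrow> 'c) \<Rightarrow> 'c set \<Rightarrow> 'c topology" where
  "quotient_top Tp f S = topology (\<lambda>V. V \<subseteq> S \<and> openin Tp {z \<in> topspace Tp. f z \<in> V})"

definition ecard' :: "'a set \<Rightarrow> enat" where
  "ecard' S = (if finite S then enat (card S) else \<infinity>)"

definition top_gen_rank :: "('a, 'b) monoid_scheme \<Rightarrow> 'a topology \<Rightarrow> enat" where
  "top_gen_rank G T = (INF S \<in> {S. S \<subseteq> carrier G \<and> T closure_of (generate G S) = carrier G}. ecard' S)"

definition group_index :: "('a, 'b) monoid_scheme \<Rightarrow> 'a set \<Rightarrow> enat" where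
  "group_index G H = ecard' (rcosets\<^bsub>G\<^esub> H)"

definition centralizer_of :: "('a, 'b) monoid_scheme \<Rightarrow> 'a \<Rightarrow> 'a set" where
  "centralizer_of G g = {x \<in> carrier G. x \<otimes>\<^bsub>G\<^esub> g = g \<otimes>\<^bsub>G\<^esub> x}"

definition closed_normal_closure :: "('a, 'b) monoid_scheme \<Rightarrow> 'a topology \<Rightarrow> 'a \<Rightarrow> 'a set" where
  "closed_normal_closure G T g = \<Inter> {H. H \<lhd> G \<and> closedin T H \<and> g \<in> H}"

definition closed_commutator :: "('a, 'b) monoid_scheme \<Rightarrow> 'a topology \<Rightarrow> 'a set \<Rightarrow> 'a set" where
  "closed_commutator G T K = T closure_of (derived G K)"

end

theory Submission
  imports Defs
begin

text \<open>Every conjugate \<open>g\<^sup>y\<close> lies in \<open>K\<close>, and modulo \<open>[K,K]\<close> it only depends on the coset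
  \<open>C\<^sub>G(g)K y\<close>: writing \<open>y = c k x\<close>, the factor \<open>c\<close> fixes \<open>g\<close> and the factor \<open>k\<close> changes
  \<open>g\<^sup>x\<close> by a conjugation inside \<open>K\<close>, which is trivial in the abelian group \<open>K/[K,K]\<close>.
  So the images of the conjugates of \<open>g\<close> in \<open>K/[K,K]\<close> form a set of at most
  \<open>|G : C\<^sub>G(g)K|\<close> elements. They generate the image of the abstract normal closure of \<open>g\<close>,
  which is dense in \<open>K\<close>; hence, by continuity of the projection, they topologically
  generate \<open>K/[K,K]\<close>.\<close>

lemma ecard'_mono: "A \<subseteq> B \<Longrightarrow> ecard' A \<le> ecard' B"
  unfolding ecard'_def by (auto simp: card_mono finite_subset)

lemma ecard'_image_le: "ecard' (f ` A) \<le> ecard' A"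
  unfolding ecard'_def by (auto simp: card_image_le)

lemma ecard'_image_le_of_constant_on_blocks:
  assumes "A \<subseteq> \<Union>P" and "\<And>B x y. B \<in> P \<Longrightarrow> x \<in> B \<Longrightarrow> y \<in> B \<Longrightarrow> f x = f y"
  shows "ecard' (f ` A) \<le> ecard' P"
proof -
  have "f ` A \<subseteq> (\<lambda>B. f (SOME x. x \<in> B)) ` P"
  proof
    fix z assume "z \<in> f ` A"
    then obtain x B where "z = f x" "x \<in> B" "B \<in> P" using assms(1) by blast
    then show "z \<in> (\<lambda>B. f (SOME x. x \<in> B)) ` P" using assms(2) by (metis image_eqI someI)
  qed
  then show ?thesis by (meson ecard'_image_le ecard'_mono order_trans)
qed

lemma openin_quotient_top:
  "openin (quotient_top Tp f S) V \<longleftrightarrow> V \<subseteq> S \<and> openin Tp {z \<in> topspace Tp. f z \<in> V}"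
proof -
  let ?P = "\<lambda>V. V \<subseteq> S \<and> openin Tp {z \<in> topspace Tp. f z \<in> V}"
  have "?P (U \<inter> V)" if "?P U" "?P V" for U V
  proof -
    have "{z \<in> topspace Tp. f z \<in> U \<inter> V} = {z \<in> topspace Tp. f z \<in> U} \<inter> {z \<in> topspace Tp. f z \<in> V}"
      by auto
    then show ?thesis using that by (auto intro!: openin_Int)
  qed
  moreover have "?P (\<Union>Us)" if "\<forall>V\<in>Us. ?P V" for Us
  proof -
    have "{z \<in> topspace Tp. f z \<in> \<Union>Us} = (\<Union>V\<in>Us. {z \<in> topspace Tp. f z \<in> V})" by auto
    then show ?thesis using that by (auto intro!: openin_Union)
  qed
  ultimately have "istopology ?P" unfolding istopology_def by blast
  then show ?thesis unfolding quotient_top_def by simp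
qed

lemma topspace_quotient_top:
  assumes "f ` topspace Tp \<subseteq> S"
  shows "topspace (quotient_top Tp f S) = S"
proof -
  have "{z \<in> topspace Tp. f z \<in> S} = topspace Tp"
    using assms by auto
  then have "openin (quotient_top Tp f S) S"
    by (simp add: openin_quotient_top)
  then show ?thesis
    by (metis openin_quotient_top openin_subset openin_topspace subset_antisym)
qed

lemma continuous_map_quotient_top:
  assumes "f ` topspace Tp \<subseteq> S"
  shows "continuous_map Tp (quotient_top Tp f S) f"
  unfolding continuous_map_def topspace_quotient_top[OF assms]
  using assms by (auto simp: openin_quotient_top)

lemma r_coset_carrier_update: "r_coset (G\<lparr>carrier := K\<rparr>) = r_coset G"
  by (simp add: r_coset_def [abs_def])

definition conjugacy_class :: "('a, 'b) monoid_scheme \<Rightarrow> 'a \<Rightarrow> 'a set" where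
  "conjugacy_class G g = (\<lambda>y. inv\<^bsub>G\<^esub> y \<otimes>\<^bsub>G\<^esub> g \<otimes>\<^bsub>G\<^esub> y) ` carrier G"

context group
begin

lemma mult_inv_cancel_left: "x \<in> carrier G \<Longrightarrow> y \<in> carrier G \<Longrightarrow> x \<otimes> (inv x \<otimes> y) = y"
  by (simp flip: m_assoc)

lemma conjugacy_class_subset_normal:
  assumes "H \<lhd> G" and "g \<in> H"
  shows "conjugacy_class G g \<subseteq> H"
proof
  fix z assume "z \<in> conjugacy_class G g"
  then obtain y where y: "y \<in> carrier G" and z: "z = inv y \<otimes> g \<otimes> y"
    unfolding conjugacy_class_def by blast
  have "inv y \<otimes> g \<otimes> inv (inv y) \<in> H"
    using assms y normal_inv_iff inv_closed by blast
  then show "z \<in> H" using y z by simp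
qed

lemma self_in_conjugacy_class: "g \<in> carrier G \<Longrightarrow> g \<in> conjugacy_class G g"
  unfolding conjugacy_class_def by (rule image_eqI[of _ _ \<one>]) auto

lemma normal_generate_conjugacy_class:
  assumes "g \<in> carrier G"
  shows "generate G (conjugacy_class G g) \<lhd> G"
proof (rule normal_generateI)
  show "conjugacy_class G g \<subseteq> carrier G"
    using assms by (auto simp: conjugacy_class_def)
next
  fix h z assume "h \<in> conjugacy_class G g" and z: "z \<in> carrier G"
  then obtain y where y: "y \<in> carrier G" and h: "h = inv y \<otimes> g \<otimes> y"
    unfolding conjugacy_class_def by blast
  have "z \<otimes> h \<otimes> inv z = inv (y \<otimes> inv z) \<otimes> g \<otimes> (y \<otimes> inv z)"
    using y z assms by (simp add: h inv_mult_group m_assoc)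
  then show "z \<otimes> h \<otimes> inv z \<in> conjugacy_class G g"
    unfolding conjugacy_class_def using y z by blast
qed

lemma commutator_in_derived:
  assumes "h1 \<in> H" "h2 \<in> H"
  shows "h1 \<otimes> h2 \<otimes> inv h1 \<otimes> inv h2 \<in> derived G H"
  unfolding derived_def
  by (rule generate.incl, rule UN_I[OF assms(1)], rule UN_I[OF assms(2)]) simp

lemma rcos_conj_eq_of_derived_subset:
  assumes "subgroup C G" "subgroup K G" "derived G K \<subseteq> C" "k \<in> K" "a \<in> K"
  shows "C #> (inv k \<otimes> a \<otimes> k) = C #> a"
proof -
  have kG: "k \<in> carrier G" and aG: "a \<in> carrier G"
    using assms(4,5) subgroup.subset[OF assms(2)] by auto
  have ik: "inv k \<in> K" by (rule subgroup.m_inv_closed[OF assms(2,4)])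
  have "inv k \<otimes> a \<otimes> inv (inv k) \<otimes> inv a \<in> C"
    by (rule subsetD[OF assms(3) commutator_in_derived[OF ik assms(5)]])
  then have "(inv k \<otimes> a \<otimes> k) \<otimes> inv a \<in> C" using kG by simp
  then have "inv k \<otimes> a \<otimes> k \<in> C #> a"
    using subgroup.rcos_module[OF assms(1) is_group aG] kG aG by simp
  then show ?thesis by (rule repr_independence[OF _ aG assms(1), symmetric])
qed

lemma rcos_conj_eq_on_rcosets:
  assumes "K \<lhd> G" "g \<in> K" "subgroup C G" "derived G K \<subseteq> C"
    and x: "x \<in> carrier G" and y: "y \<in> (centralizer_of G g <#> K) #> x"
  shows "C #> (inv y \<otimes> g \<otimes> y) = C #> (inv x \<otimes> g \<otimes> x)"
proof -
  have K: "subgroup K G" using assms(1) normal_imp_subgroup by blast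
  obtain c k where c: "c \<in> centralizer_of G g" and k: "k \<in> K" and yckx: "y = c \<otimes> k \<otimes> x"
    using y unfolding r_coset_def set_mult_def by auto
  have cG: "c \<in> carrier G" and cg: "c \<otimes> g = g \<otimes> c"
    using c unfolding centralizer_of_def by auto
  have kG: "k \<in> carrier G" and gG: "g \<in> carrier G"
    using k assms(2) K subgroup.subset by auto
  define k' where "k' = inv x \<otimes> k \<otimes> x"
  have "inv x \<otimes> k \<otimes> inv (inv x) \<in> K"
    using assms(1) k x normal_inv_iff inv_closed by blast
  then have k': "k' \<in> K" using x by (simp add: k'_def)
  have gx: "inv x \<otimes> g \<otimes> x \<in> K"
    using conjugacy_class_subset_normal[OF assms(1,2)] x unfolding conjugacy_class_def by blast
  have c_fixes_g: "inv c \<otimes> g \<otimes> c = g"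
    using cG gG by (simp add: m_assoc flip: cg) (simp flip: m_assoc)
  have "inv y \<otimes> g \<otimes> y = inv (k \<otimes> x) \<otimes> (inv c \<otimes> g \<otimes> c) \<otimes> (k \<otimes> x)"
    using cG kG gG x by (simp add: yckx inv_mult_group m_assoc)
  also have "\<dots> = inv (k \<otimes> x) \<otimes> g \<otimes> (k \<otimes> x)"
    by (simp only: c_fixes_g)
  also have "\<dots> = inv k' \<otimes> (inv x \<otimes> g \<otimes> x) \<otimes> k'"
    using kG gG x by (simp add: k'_def inv_mult_group m_assoc mult_inv_cancel_left)
  also have "C #> \<dots> = C #> (inv x \<otimes> g \<otimes> x)"
    by (rule rcos_conj_eq_of_derived_subset[OF assms(3) K assms(4) k' gx])
  finally show ?thesis .
qed

lemma ecard'_rcos_conjugacy_class_le_index: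
  assumes "K \<lhd> G" "g \<in> K" "subgroup C G" "derived G K \<subseteq> C"
  shows "ecard' ((\<lambda>z. C #> z) ` conjugacy_class G g)
           \<le> group_index G (centralizer_of G g <#> K)"
proof -
  let ?H = "centralizer_of G g <#> K"
  have K: "subgroup K G" using assms(1) normal_imp_subgroup by blast
  have "g \<in> carrier G" using assms(2) K subgroup.subset by blast
  then have "\<one> \<in> centralizer_of G g" by (simp add: centralizer_of_def)
  then have "\<one> \<otimes> \<one> \<in> ?H"
    using subgroup.one_closed[OF K] unfolding set_mult_def by blast
  then have one_H: "\<one> \<in> ?H" by simp
  have "y \<in> ?H #> y" if "y \<in> carrier G" for y
  proof -
    have "\<one> \<otimes> y \<in> ?H #> y" using one_H unfolding r_coset_def by blast
    then show ?thesis using that by simp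
  qed
  then have cover: "carrier G \<subseteq> \<Union>(rcosets ?H)"
    unfolding RCOSETS_def by blast
  have "(\<lambda>z. C #> z) ` conjugacy_class G g = (\<lambda>y. C #> (inv y \<otimes> g \<otimes> y)) ` carrier G"
    unfolding conjugacy_class_def by (simp add: image_image)
  also have "ecard' \<dots> \<le> ecard' (rcosets ?H)"
  proof (rule ecard'_image_le_of_constant_on_blocks[OF cover])
    fix B y z assume "B \<in> rcosets ?H" "y \<in> B" "z \<in> B"
    then obtain x where "x \<in> carrier G" "y \<in> ?H #> x" "z \<in> ?H #> x"
      unfolding RCOSETS_def by blast
    then show "C #> (inv y \<otimes> g \<otimes> y) = C #> (inv z \<otimes> g \<otimes> z)"
      using rcos_conj_eq_on_rcosets[OF assms] by metis
  qed
  finally show ?thesis unfolding group_index_def .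
qed

lemma top_gen_rank_Mod_le_of_dense:
  assumes K: "subgroup K G" and C: "C \<lhd> G\<lparr>carrier := K\<rparr>"
    and "S \<subseteq> K" and dense: "K \<subseteq> T closure_of generate G S"
  shows "top_gen_rank (G\<lparr>carrier := K\<rparr> Mod C)
           (quotient_top (subtopology T K) (\<lambda>x. C #> x) (carrier (G\<lparr>carrier := K\<rparr> Mod C)))
         \<le> ecard' ((\<lambda>x. C #> x) ` S)"
proof -
  define Q where "Q = G\<lparr>carrier := K\<rparr> Mod C"
  define f where "f = (\<lambda>x. C #> x)"
  define Y where "Y = quotient_top (subtopology T K) f (carrier Q)"
  have carrier_Q: "carrier Q = f ` K"
    unfolding Q_def f_def carrier_FactGroup r_coset_carrier_update by simp
  interpret C: normal C "G\<lparr>carrier := K\<rparr>" by (rule C)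
  interpret f: group_hom "G\<lparr>carrier := K\<rparr>" Q f
    using C.r_coset_hom_Mod C.factorgroup_is_group C.is_group
    by (simp add: group_hom_def group_hom_axioms_def Q_def f_def r_coset_carrier_update)
  have gen_K: "generate G S \<subseteq> K"
    by (rule generate_subgroup_incl[OF \<open>S \<subseteq> K\<close> K])
  have "generate Q (f ` S) = f ` generate G S"
    using f.generate_img \<open>S \<subseteq> K\<close> generate_consistent[OF \<open>S \<subseteq> K\<close> K] by simp
  moreover have "subtopology T K closure_of generate G S = K"
    using dense gen_K by (auto simp: closure_of_subtopology Int_absorb1)
  moreover have "continuous_map (subtopology T K) Y f"
    unfolding Y_def using dense closure_of_subset_topspace carrier_Q
    by (intro continuous_map_quotient_top) auto
  ultimately have "carrier Q \<subseteq> Y closure_of generate Q (f ` S)"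
    using continuous_map_image_closure_subset carrier_Q by metis
  moreover have "topspace Y = carrier Q"
    unfolding Y_def using dense closure_of_subset_topspace carrier_Q
    by (intro topspace_quotient_top) auto
  ultimately have "Y closure_of generate Q (f ` S) = carrier Q"
    using closure_of_subset_topspace[of Y "generate Q (f ` S)"] by (intro subset_antisym) simp_all
  moreover have "f ` S \<subseteq> carrier Q"
    using \<open>S \<subseteq> K\<close> carrier_Q by blast
  ultimately have "top_gen_rank Q Y \<le> ecard' (f ` S)"
    unfolding top_gen_rank_def by (intro INF_lower) auto
  then show ?thesis by (simp add: Q_def Y_def f_def)
qed

end

locale topological_group = group G for G :: "('a, 'b) monoid_scheme" (structure) +
  fixes T :: "'a topology"
  assumes topspace_eq: "topspace T = carrier G"
    and mult_continuous: "continuous_map (prod_topology T T) T (\<lambda>(x, y). x \<otimes> y)"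
    and inv_continuous: "continuous_map T T (\<lambda>x. inv x)"

lemma profinite_group_imp_topological_group:
  "profinite_group G T \<Longrightarrow> topological_group G T"
  unfolding profinite_group_def topological_group_def topological_group_axioms_def by auto

context topological_group
begin

lemma continuous_map_mult_fun:
  assumes "continuous_map T T f" and "continuous_map T T h"
  shows "continuous_map T T (\<lambda>y. f y \<otimes> h y)"
proof -
  have "continuous_map T T ((\<lambda>(x, y). x \<otimes> y) \<circ> (\<lambda>y. (f y, h y)))"
    by (intro continuous_map_compose[OF _ mult_continuous] continuous_map_pairedI assms)
  then show ?thesis by (simp add: o_def)
qed

lemma continuous_map_conjugation:
  assumes "x \<in> carrier G"
  shows "continuous_map T T (\<lambda>y. x \<otimes> y \<otimes> inv x)"
  using assms topspace_eq
  by (intro continuous_map_mult_fun continuous_map_id[unfolded id_def] continuous_map_const[THEN iffD2]) auto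

lemma subgroup_closure_of:
  assumes "subgroup H G"
  shows "subgroup (T closure_of H) G"
proof (rule subgroupI)
  show "T closure_of H \<subseteq> carrier G"
    using closure_of_subset_topspace[of T H] topspace_eq by simp
  have "H \<subseteq> T closure_of H"
    using closure_of_subset[of H T] subgroup.subset[OF assms] topspace_eq by simp
  then show "T closure_of H \<noteq> {}"
    using subgroup.one_closed[OF assms] by blast
next
  fix a assume "a \<in> T closure_of H"
  then have "inv a \<in> T closure_of ((\<lambda>x. inv x) ` H)"
    using continuous_map_image_closure_subset[OF inv_continuous] by blast
  moreover have "(\<lambda>x. inv x) ` H \<subseteq> H"
    using subgroup.m_inv_closed[OF assms] by blast
  ultimately show "inv a \<in> T closure_of H"
    using closure_of_mono by blast
next
  fix a b assume "a \<in> T closure_of H" and "b \<in> T closure_of H"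
  then have "(a, b) \<in> prod_topology T T closure_of (H \<times> H)"
    by (simp add: closure_of_Times)
  then have "a \<otimes> b \<in> T closure_of ((\<lambda>(x, y). x \<otimes> y) ` (H \<times> H))"
    using continuous_map_image_closure_subset[OF mult_continuous] by fastforce
  moreover have "(\<lambda>(x, y). x \<otimes> y) ` (H \<times> H) \<subseteq> H"
    using subgroup.m_closed[OF assms] by auto
  ultimately show "a \<otimes> b \<in> T closure_of H"
    using closure_of_mono by blast
qed

lemma normal_closure_of:
  assumes "H \<lhd> G"
  shows "(T closure_of H) \<lhd> G"
  unfolding normal_inv_iff
proof (intro conjI ballI subgroup_closure_of normal_imp_subgroup[OF assms])
  fix x h assume x: "x \<in> carrier G" and "h \<in> T closure_of H"
  moreover have "(\<lambda>y. x \<otimes> y \<otimes> inv x) ` (T closure_of H)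
      \<subseteq> T closure_of ((\<lambda>y. x \<otimes> y \<otimes> inv x) ` H)"
    by (rule continuous_map_image_closure_subset[OF continuous_map_conjugation[OF x]])
  moreover have "(\<lambda>y. x \<otimes> y \<otimes> inv x) ` H \<subseteq> H"
    using assms x normal_inv_iff by blast
  ultimately show "x \<otimes> h \<otimes> inv x \<in> T closure_of H"
    using closure_of_mono by blast
qed

lemma closed_normal_closure_eq:
  assumes "g \<in> carrier G"
  shows "closed_normal_closure G T g = T closure_of generate G (conjugacy_class G g)"
proof -
  let ?N = "generate G (conjugacy_class G g)"
  have N: "?N \<lhd> G" by (rule normal_generate_conjugacy_class[OF assms])
  have "?N \<subseteq> topspace T"
    using subgroup.subset[OF normal_imp_subgroup[OF N]] topspace_eq by simp
  then have "g \<in> T closure_of ?N"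
    using closure_of_subset generate.incl[OF self_in_conjugacy_class[OF assms]] by blast
  then have "closed_normal_closure G T g \<subseteq> T closure_of ?N"
    unfolding closed_normal_closure_def using normal_closure_of[OF N] by (intro Inter_lower) simp
  moreover have "T closure_of ?N \<subseteq> H" if "H \<lhd> G" "closedin T H" "g \<in> H" for H
    using closure_of_minimal generate_subgroup_incl conjugacy_class_subset_normal
      normal_imp_subgroup that by metis
  ultimately show ?thesis
    unfolding closed_normal_closure_def by blast
qed

lemma normal_closed_commutator: "K \<lhd> G \<Longrightarrow> closed_commutator G T K \<lhd> G"
  unfolding closed_commutator_def by (intro normal_closure_of derived_is_normal)

lemma derived_subset_closed_commutator:
  "K \<subseteq> carrier G \<Longrightarrow> derived G K \<subseteq> closed_commutator G T K"
  unfolding closed_commutator_def using derived_in_carrier topspace_eq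
  by (intro closure_of_subset) simp

lemma closed_commutator_subset:
  "subgroup K G \<Longrightarrow> closedin T K \<Longrightarrow> closed_commutator G T K \<subseteq> K"
  unfolding closed_commutator_def by (intro closure_of_minimal derived_incl) auto

end

theorem lemma3p1:
  fixes G :: "('a, 'b) monoid_scheme" and T :: "'a topology" and g :: 'a
  assumes "profinite_group G T" and "g \<in> carrier G"
  defines "K \<equiv> closed_normal_closure G T g"
  defines "C \<equiv> closed_commutator G T K"
  defines "Q \<equiv> (G\<lparr>carrier := K\<rparr>) Mod C"
  shows "top_gen_rank Q (quotient_top (subtopology T K) (\<lambda>x. C #>\<^bsub>G\<^esub> x) (carrier Q))
           \<le> group_index G (centralizer_of G g <#>\<^bsub>G\<^esub> K)"
proof -
  interpret topological_group G T
    using assms(1) by (rule profinite_group_imp_topological_group)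
  have K_eq: "K = T closure_of generate G (conjugacy_class G g)"
    unfolding K_def by (rule closed_normal_closure_eq[OF assms(2)])
  have K: "K \<lhd> G"
    unfolding K_eq by (rule normal_closure_of[OF normal_generate_conjugacy_class[OF assms(2)]])
  then have K_subgroup: "subgroup K G" by (rule normal_imp_subgroup)
  have "closedin T K"
    unfolding K_eq by simp
  have "g \<in> K"
    unfolding K_def closed_normal_closure_def by blast
  have C: "C \<lhd> G" "derived G K \<subseteq> C" "C \<subseteq> K"
    unfolding C_def
    using normal_closed_commutator[OF K]
      derived_subset_closed_commutator[OF subgroup.subset[OF K_subgroup]]
      closed_commutator_subset[OF K_subgroup \<open>closedin T K\<close>]
    by auto
  have "top_gen_rank Q (quotient_top (subtopology T K) (\<lambda>x. C #>\<^bsub>G\<^esub> x) (carrier Q))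
      \<le> ecard' ((\<lambda>x. C #>\<^bsub>G\<^esub> x) ` conjugacy_class G g)"
    unfolding Q_def
  proof (rule top_gen_rank_Mod_le_of_dense[OF K_subgroup])
    show "C \<lhd> G\<lparr>carrier := K\<rparr>"
      by (rule normal_restrict_supergroup[OF K_subgroup C(1,3)])
    show "conjugacy_class G g \<subseteq> K"
      by (rule conjugacy_class_subset_normal[OF K \<open>g \<in> K\<close>])
  qed (simp flip: K_eq)
  also have "\<dots> \<le> group_index G (centralizer_of G g <#>\<^bsub>G\<^esub> K)"
    by (rule ecard'_rcos_conjugacy_class_le_index[OF K \<open>g \<in> K\<close>
        normal_imp_subgroup[OF C(1)] C(2)])
  finally show ?thesis .
qed

end
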